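(* Let $\mathcal{M}=(X,\tau,\Phi,V)$ be a topo-model, $\theta\in\Phi$ and $\varphi,\psi\in\mathcal{L}_{APAL_{int}}$. Then (1) $[\![\psi]\!]^{\theta^\varphi}=[\![\langle\varphi\rangle\psi]\!]^\theta$; (2) $\theta^\varphi=\theta^{\mathrm{int}(\varphi)}$; (3) $(\theta^\varphi)^\psi=\theta^{\langle\varphi\rangle\mathrm{int}(\psi)}$ (as partial functions).
   Context: Fix a countable set $\mathit{Prop}$ and a finite non-empty set $\mathcal{A}$ of agents. $\mathcal{L}_{APAL_{int}}$: $\varphi ::= p \mid \neg\varphi \mid \varphi\wedge\varphi \mid K_i\varphi \mid \mathrm{int}(\varphi)\mid [\varphi]\varphi\mid\Box\varphi$; $\mathcal{L}_{PAL_{int}}$ is the $\Box$-free fragment; $\langle\varphi\rangle\psi:=\neg[\varphi]\neg\psi$. Topo-model $(X,\tau,\Phi,V)$: $(X,\tau)$ topological space with interior operator $\mathrm{Int}$; $V(p)\subseteq X$; $\Phi$ a set of partial functions $\theta$ from $X$ to functions $\mathcal{A}\to\tau$ such that for all $x,y\in Dom(\theta)$, $i$, $U\in\tau$: $\theta(x)(i)\in\tau$; $x\in\theta(x)(i)$; $\theta(x)(i)\subseteq Dom(\theta)$; $y\in\theta(x)(i)\Rightarrow\theta(x)(i)=\theta(y)(i)$; $\theta|_U\in\Phi$ (domain $Dom(\theta)\cap U$, values $\theta|_U(x)(i)=\theta(x)(i)\cap U$). Semantics at $(x,\theta)$ with $x\in Dom(\theta)$: $p$ iff $x\in V(p)$;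 Booleans usual; $K_i\varphi$ iff $\varphi$ holds at $(y,\theta)$ for all $y\in\theta(x)(i)$; $\mathrm{int}(\varphi)$ iff $x\in\mathrm{Int}([\![\varphi]\!]^\theta)$ where $[\![\varphi]\!]^\theta=\{y\in Dom(\theta)\mid(y,\theta)\models\varphi\}$; $[\varphi]\psi$ iff $(x,\theta)\models\mathrm{int}(\varphi)$ implies $(x,\theta^\varphi)\models\psi$; $\Box\varphi$ iff $(x,\theta)\models[\psi]\varphi$ for all $\psi\in\mathcal{L}_{PAL_{int}}$. Here the updated function $\theta^\varphi$ is the partial function with $Dom(\theta^\varphi)=\mathrm{Int}([\![\varphi]\!]^\theta)$ and $\theta^\varphi(x)(i)=\theta(x)(i)\cap\mathrm{Int}([\![\varphi]\!]^\theta)$. *)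

theory Defs
  imports "HOL-Analysis.Analysis" "HOL-Library.Countable"
begin

datatype ('p, 'a) form =
    Atom 'p
  | Neg "('p, 'a) form"
  | Conj "('p, 'a) form" "('p, 'a) form"
  | K 'a "('p, 'a) form"
  | IntF "('p, 'a) form"
  | Ann "('p, 'a) form" "('p, 'a) form"
  | Box "('p, 'a) form"

definition Dia :: "('p, 'a) form \<Rightarrow> ('p, 'a) form \<Rightarrow> ('p, 'a) form" where
  "Dia \<phi> \<psi> = Neg (Ann \<phi> (Neg \<psi>))"

fun pal :: "('p, 'a) form \<Rightarrow> bool" where
  "pal (Atom p) = True"
| "pal (Neg \<phi>) = pal \<phi>"
| "pal (Conj \<phi> \<psi>) = (pal \<phi> \<and> pal \<psi>)"
| "pal (K i \<phi>) = pal \<phi>"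
| "pal (IntF \<phi>) = pal \<phi>"
| "pal (Ann \<phi> \<psi>) = (pal \<phi> \<and> pal \<psi>)"
| "pal (Box \<phi>) = False"

type_synonym ('x, 'a) pfun = "'x \<Rightarrow> ('a \<Rightarrow> 'x set) option"

definition Dom :: "('x, 'a) pfun \<Rightarrow> 'x set" where
  "Dom \<theta> = {x. \<theta> x \<noteq> None}"

definition restr :: "('x, 'a) pfun \<Rightarrow> 'x set \<Rightarrow> ('x, 'a) pfun" where
  "restr \<theta> U = (\<lambda>x. if x \<in> Dom \<theta> \<and> x \<in> U then Some (\<lambda>i. the (\<theta> x) i \<inter> U) else None)"

definition topo_model ::
  "'x topology \<Rightarrow> ('x, 'a::finite) pfun set \<Rightarrow> ('p::countable \<Rightarrow> 'x set) \<Rightarrow> bool" where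
  "topo_model T Phi V \<longleftrightarrow>
     (\<forall>p. V p \<subseteq> topspace T) \<and>
     (\<forall>\<theta>\<in>Phi. Dom \<theta> \<subseteq> topspace T \<and>
        (\<forall>x\<in>Dom \<theta>. \<forall>i.
            openin T (the (\<theta> x) i) \<and> x \<in> the (\<theta> x) i \<and> the (\<theta> x) i \<subseteq> Dom \<theta> \<and>
            (\<forall>y\<in>Dom \<theta>. y \<in> the (\<theta> x) i \<longrightarrow> the (\<theta> x) i = the (\<theta> y) i)) \<and>
        (\<forall>U. openin T U \<longrightarrow> restr \<theta> U \<in> Phi))"

definition upd :: "'x topology \<Rightarrow> ('x, 'a) pfun \<Rightarrow> 'x set \<Rightarrow> ('x, 'a) pfun" where
  "upd T \<theta> S = restr \<theta> (T interior_of S)"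

text \<open>Semantics of PAL_int formulas (the Box clause is irrelevant here; only
  used on pal formulas).\<close>
primrec semP :: "'x topology \<Rightarrow> ('p \<Rightarrow> 'x set) \<Rightarrow> ('p, 'a) form \<Rightarrow> ('x, 'a) pfun \<Rightarrow> 'x set" where
  "semP T V (Atom p) \<theta> = Dom \<theta> \<inter> V p"
| "semP T V (Neg \<phi>) \<theta> = Dom \<theta> - semP T V \<phi> \<theta>"
| "semP T V (Conj \<phi> \<psi>) \<theta> = semP T V \<phi> \<theta> \<inter> semP T V \<psi> \<theta>"
| "semP T V (K i \<phi>) \<theta> = {x \<in> Dom \<theta>. the (\<theta> x) i \<subseteq> semP T V \<phi> \<theta>}"
| "semP T V (IntF \<phi>) \<theta> = Dom \<theta> \<inter> (T interior_of semP T V \<phi> \<theta>)"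
| "semP T V (Ann \<phi> \<psi>) \<theta> = {x \<in> Dom \<theta>. x \<in> T interior_of semP T V \<phi> \<theta> \<longrightarrow>
                                   x \<in> semP T V \<psi> (upd T \<theta> (semP T V \<phi> \<theta>))}"
| "semP T V (Box \<phi>) \<theta> = {}"

text \<open>Full semantics: the extension [[phi]]^theta = {x \<in> Dom theta. (x,theta) |= phi}.
  Box phi holds iff [psi]phi holds for all PAL_int psi (for such psi, semP = sem).\<close>
primrec sem :: "'x topology \<Rightarrow> ('p \<Rightarrow> 'x set) \<Rightarrow> ('p, 'a) form \<Rightarrow> ('x, 'a) pfun \<Rightarrow> 'x set" where
  "sem T V (Atom p) \<theta> = Dom \<theta> \<inter> V p"
| "sem T V (Neg \<phi>) \<theta> = Dom \<theta> - sem T V \<phi> \<theta>"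
| "sem T V (Conj \<phi> \<psi>) \<theta> = sem T V \<phi> \<theta> \<inter> sem T V \<psi> \<theta>"
| "sem T V (K i \<phi>) \<theta> = {x \<in> Dom \<theta>. the (\<theta> x) i \<subseteq> sem T V \<phi> \<theta>}"
| "sem T V (IntF \<phi>) \<theta> = Dom \<theta> \<inter> (T interior_of sem T V \<phi> \<theta>)"
| "sem T V (Ann \<phi> \<psi>) \<theta> = {x \<in> Dom \<theta>. x \<in> T interior_of sem T V \<phi> \<theta> \<longrightarrow>
                                   x \<in> sem T V \<psi> (upd T \<theta> (sem T V \<phi> \<theta>))}"
| "sem T V (Box \<phi>) \<theta> = {x \<in> Dom \<theta>. \<forall>\<psi>. pal \<psi> \<longrightarrow>
                                   (x \<in> T interior_of semP T V \<psi> \<theta> \<longrightarrow>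
                                    x \<in> sem T V \<phi> (upd T \<theta> (semP T V \<psi> \<theta>)))}"

definition update :: "'x topology \<Rightarrow> ('p \<Rightarrow> 'x set) \<Rightarrow> ('x, 'a) pfun \<Rightarrow> ('p, 'a) form \<Rightarrow> ('x, 'a) pfun" where
  "update T V \<theta> \<phi> = upd T \<theta> (sem T V \<phi> \<theta>)"

end

theory Submission
  imports Defs
begin

text \<open>All three identities are pure set algebra: the update by \<open>\<phi>\<close> is the restriction
  to the open set \<open>Int [[\<phi>]]\<close>, restrictions compose by intersection, and every extension
  lies inside the domain of the current function. None of the topo-model axioms is needed.\<close>

lemma Dom_restr [simp]: "Dom (restr \<theta> U) = Dom \<theta> \<inter> U"
  by (auto simp: Dom_def restr_def)

lemma restr_restr: "restr (restr \<theta> A) U = restr \<theta> (A \<inter> U)"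
  by (rule ext) (auto simp: restr_def Dom_def Int_assoc)

lemma update_eq_restr: "update T V \<theta> \<phi> = restr \<theta> (T interior_of sem T V \<phi> \<theta>)"
  by (simp add: update_def upd_def)

lemma sem_subset_Dom: "sem T V \<psi> \<theta> \<subseteq> Dom \<theta>"
  by (induction \<psi> arbitrary: \<theta>) auto

lemma interior_of_Int_interior_of:
  "S \<subseteq> D \<Longrightarrow> T interior_of (D \<inter> T interior_of S) = T interior_of S"
  by (metis Int_absorb1 interior_of_interior_of interior_of_subset order_trans)

lemma sem_update: "sem T V \<psi> (update T V \<theta> \<phi>) = sem T V (Dia \<phi> \<psi>) \<theta>"
  using sem_subset_Dom[of T V \<psi> "update T V \<theta> \<phi>"]
  by (auto simp: Dia_def update_def upd_def)

lemma update_IntF: "update T V \<theta> (IntF \<phi>) = update T V \<theta> \<phi>"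
  by (simp add: update_eq_restr interior_of_Int_interior_of sem_subset_Dom)

lemma update_update: "update T V (update T V \<theta> \<phi>) \<psi> = update T V \<theta> (Dia \<phi> (IntF \<psi>))"
proof -
  define A where "A = T interior_of sem T V \<phi> \<theta>"
  define B where "B = sem T V \<psi> (update T V \<theta> \<phi>)"
  have B_sub: "B \<subseteq> Dom \<theta> \<inter> A"
    using sem_subset_Dom[of T V \<psi> "update T V \<theta> \<phi>"] by (simp add: B_def A_def update_eq_restr)
  then have int_B_sub: "T interior_of B \<subseteq> Dom \<theta> \<inter> A"
    by (rule order_trans[OF interior_of_subset])
  have "sem T V (Dia \<phi> (IntF \<psi>)) \<theta> = Dom \<theta> \<inter> A \<inter> T interior_of B"
    unfolding sem_update[symmetric] B_def A_def by (simp add: update_eq_restr)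
  also have "\<dots> = T interior_of B"
    using int_B_sub by (rule Int_absorb1)
  finally have "update T V \<theta> (Dia \<phi> (IntF \<psi>)) = restr \<theta> (T interior_of B)"
    by (simp add: update_eq_restr)
  moreover have "update T V (update T V \<theta> \<phi>) \<psi> = restr \<theta> (A \<inter> T interior_of B)"
    by (simp add: update_eq_restr restr_restr A_def B_def)
  ultimately show ?thesis
    using int_B_sub by (simp add: Int_absorb1)
qed

theorem mainTheorem10:
  fixes T :: "'x topology" and Phi :: "('x, 'a::finite) pfun set"
    and V :: "'p::countable \<Rightarrow> 'x set" and \<theta> :: "('x, 'a) pfun"
    and \<phi> \<psi> :: "('p, 'a) form"
  assumes "topo_model T Phi V" and "\<theta> \<in> Phi"
  shows "sem T V \<psi> (update T V \<theta> \<phi>) = sem T V (Dia \<phi> \<psi>) \<theta> \<and>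
         update T V \<theta> \<phi> = update T V \<theta> (IntF \<phi>) \<and>
         update T V (update T V \<theta> \<phi>) \<psi> = update T V \<theta> (Dia \<phi> (IntF \<psi>))"
  using sem_update update_IntF update_update by metis

end
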